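(* Let $G=\bigl((f_j)_{j=1}^n;(\mu^{R})_{\emptyset\ne R\subseteq[n]}\bigr)$ be an $n$-resource selection game with $f_1,\ldots,f_n$ continuous, and let $S\subseteq[n]$. Then for every $j\in[n]\setminus S$, $h_j(G-S)\ge h_j(G)$.
   Context: An $n$-resource selection game is $G=\bigl((f_j)_{j=1}^n;(\mu^{R})_{\emptyset\ne R\subseteq[n]}\bigr)$ with each $f_j:[0,\infty)\to\mathbb{R}$ nondecreasing and each $\mu^R\ge0$ (games on a general finite resource set are defined analogously). A consumption profile assigns to each nonempty $R$ a vector $s(R)\ge0$ supported on $R$ with total $\mu^R$; loads $\mu^s_j=\sum_R s_j(R)$, costs $h^s_j=f_j(\mu^s_j)$; $s$ is a Nash equilibrium if for every $R$, every $k$ with $s_k(R)>0$ and every $j\in R$, $h^s_k\le h^s_j$. When all $f_j$ are continuous, a Nash equilibrium exists and every Nash equilibrium gives resource $j$ the same cost; $h_j(G)$ denotes this common value. Resource removal: for $S\subsetneq[n]$, $G-S$ is the game with resources $[n]\setminus S$, cost functions $(f_j)_{j\notin S}$, and mass $\sum_{R:\,R\setminus S=R'}\mu^R$ for each nonempty $R'\subseteq[n]\setminus S$ (players who can use only resources in $S$ are removed); $G-\emptyset=G$. *)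

theory Defs
  imports "HOL-Analysis.Analysis"
begin

text \<open>A resource selection game on a finite resource set E (resources are naturals) is given
by cost functions f :: nat \<Rightarrow> real \<Rightarrow> real (f j is the cost function of resource j) and
masses mu :: nat set \<Rightarrow> real (mu R is the mass of players who may use exactly the resources R,
for nonempty R \<subseteq> E). Values of f, mu outside E / outside the nonempty subsets of E are irrelevant.\<close>

definition players :: "nat set \<Rightarrow> nat set set" where
  "players E = {R. R \<subseteq> E \<and> R \<noteq> {}}"

definition is_game :: "nat set \<Rightarrow> (nat \<Rightarrow> real \<Rightarrow> real) \<Rightarrow> (nat set \<Rightarrow> real) \<Rightarrow> bool" where
  "is_game E f mu \<longleftrightarrow> finite E \<and> (\<forall>j\<in>E. mono_on {0..} (f j)) \<and> (\<forall>R\<in>players E. mu R \<ge> 0)"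

definition consumption_profile ::
  "nat set \<Rightarrow> (nat set \<Rightarrow> real) \<Rightarrow> (nat set \<Rightarrow> nat \<Rightarrow> real) \<Rightarrow> bool" where
  "consumption_profile E mu s \<longleftrightarrow>
     (\<forall>R\<in>players E. (\<forall>j. s R j \<ge> 0) \<and> (\<forall>j. j \<notin> R \<longrightarrow> s R j = 0) \<and> (\<Sum>j\<in>R. s R j) = mu R)"

definition load :: "nat set \<Rightarrow> (nat set \<Rightarrow> nat \<Rightarrow> real) \<Rightarrow> nat \<Rightarrow> real" where
  "load E s j = (\<Sum>R\<in>players E. s R j)"

definition cost :: "nat set \<Rightarrow> (nat \<Rightarrow> real \<Rightarrow> real) \<Rightarrow> (nat set \<Rightarrow> nat \<Rightarrow> real) \<Rightarrow> nat \<Rightarrow> real" where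
  "cost E f s j = f j (load E s j)"

definition nash ::
  "nat set \<Rightarrow> (nat \<Rightarrow> real \<Rightarrow> real) \<Rightarrow> (nat set \<Rightarrow> real) \<Rightarrow> (nat set \<Rightarrow> nat \<Rightarrow> real) \<Rightarrow> bool" where
  "nash E f mu s \<longleftrightarrow> consumption_profile E mu s \<and>
     (\<forall>R\<in>players E. \<forall>k\<in>R. \<forall>j\<in>R. s R k > 0 \<longrightarrow> cost E f s k \<le> cost E f s j)"

text \<open>h_j(G): the common cost of resource j at every Nash equilibrium.\<close>
definition eq_cost :: "nat set \<Rightarrow> (nat \<Rightarrow> real \<Rightarrow> real) \<Rightarrow> (nat set \<Rightarrow> real) \<Rightarrow> nat \<Rightarrow> real" where
  "eq_cost E f mu j = (THE c. \<exists>s. nash E f mu s \<and> c = cost E f s j)"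

text \<open>Resource removal G - S: resources E - S, same cost functions, and mass of R' equal to
the total mass of the R with R - S = R'.\<close>
definition removed_mass :: "nat set \<Rightarrow> nat set \<Rightarrow> (nat set \<Rightarrow> real) \<Rightarrow> nat set \<Rightarrow> real" where
  "removed_mass E S mu R' = (\<Sum>R\<in>{R\<in>players E. R - S = R'}. mu R)"

end

theory Submission
  imports Defs
begin

text \<open>Let s be an equilibrium of G, t one of G - S, and A the set of surviving resources that are
strictly cheaper under t than under s. By monotonicity each resource of A carries strictly less load
under t. But if a player R of G puts mass on some k \<in> A, the player R - S of G - S puts all its mass
on A: for any i \<in> R - S used under t the two equilibrium conditions give
cost_t i \<le> cost_t k < cost_s k \<le> cost_s i, so i \<in> A. Summing over players, the load on A does not drop,
hence A is empty. With S = {} the same comparison shows that all equilibria of G have equal costs.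

Equilibria exist since a minimiser of the Beckmann potential, the sum over j of the integral of f j
from 0 to the load of j, over the compact set of consumption profiles is one: moving a little mass
to a strictly cheaper resource would decrease the potential.\<close>

lemma finite_players: "finite E \<Longrightarrow> finite (players E)"
  unfolding players_def by (rule finite_subset[of _ "Pow E"]) auto

lemma finite_player: "finite E \<Longrightarrow> R \<in> players E \<Longrightarrow> finite R"
  unfolding players_def by (auto intro: finite_subset)

lemma consumption_profileD:
  assumes "consumption_profile E mu s" and "R \<in> players E"
  shows "0 \<le> s R j" and "j \<notin> R \<Longrightarrow> s R j = 0" and "(\<Sum>j\<in>R. s R j) = mu R"
  using assms unfolding consumption_profile_def by auto

lemma load_nonneg: "consumption_profile E mu s \<Longrightarrow> 0 \<le> load E s j"
  unfolding load_def by (rule sum_nonneg) (rule consumption_profileD(1))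

lemma consumption_profile_sum_restrict:
  assumes "consumption_profile E mu s" "R \<in> players E" "finite A"
  shows "(\<Sum>i\<in>A. s R i) = (\<Sum>i\<in>A \<inter> R. s R i)"
  by (rule sum.mono_neutral_right) (use assms consumption_profileD(2)[OF assms(1,2)] in auto)

lemma consumption_profile_sum_le:
  assumes "finite E" "consumption_profile E mu s" "R \<in> players E" "finite A"
  shows "(\<Sum>i\<in>A. s R i) \<le> mu R"
proof -
  have "(\<Sum>i\<in>A \<inter> R. s R i) \<le> (\<Sum>i\<in>R. s R i)"
    by (rule sum_mono2) (use finite_player[OF assms(1,3)] consumption_profileD(1)[OF assms(2,3)] in auto)
  then show ?thesis
    using consumption_profile_sum_restrict[OF assms(2-4)] consumption_profileD(3)[OF assms(2,3)] by simp
qed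

lemma consumption_profile_sum_eq:
  assumes "finite E" "consumption_profile E mu s" "R \<in> players E" "finite A"
    and "\<forall>i\<in>R - A. s R i = 0"
  shows "(\<Sum>i\<in>A. s R i) = mu R"
proof -
  have "(\<Sum>i\<in>A \<inter> R. s R i) = (\<Sum>i\<in>R. s R i)"
    by (rule sum.mono_neutral_left) (use finite_player[OF assms(1,3)] assms(5) in auto)
  then show ?thesis
    using consumption_profile_sum_restrict[OF assms(2-4)] consumption_profileD(3)[OF assms(2,3)] by simp
qed

section \<open>Comparing equilibria of G and G - S\<close>

lemma sum_load_regroup:
  assumes "finite E" "consumption_profile E mu s" "A \<subseteq> E - S"
  shows "(\<Sum>i\<in>A. load E s i) =
    (\<Sum>R'\<in>players (E - S). \<Sum>R\<in>{R\<in>players E. R - S = R'}. \<Sum>i\<in>A. s R i)"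
proof -
  have image: "(\<lambda>R. R - S) ` players E \<subseteq> insert {} (players (E - S))"
    unfolding players_def by auto
  have "(\<Sum>i\<in>A. load E s i) = (\<Sum>R\<in>players E. \<Sum>i\<in>A. s R i)"
    unfolding load_def by (rule sum.swap)
  also have "\<dots> = (\<Sum>R'\<in>insert {} (players (E - S)). \<Sum>R\<in>{R\<in>players E. R - S = R'}. \<Sum>i\<in>A. s R i)"
    by (rule sum.group[symmetric, OF finite_players[OF assms(1)] _ image])
      (use assms(1) finite_players[of "E - S"] in auto)
  also have "\<dots> = (\<Sum>R'\<in>players (E - S). \<Sum>R\<in>{R\<in>players E. R - S = R'}. \<Sum>i\<in>A. s R i)"
  proof -
    have "s R i = 0" if "R \<in> players E" "R - S = {}" "i \<in> A" for R i
      using that assms(3) by (auto intro: consumption_profileD(2)[OF assms(2)])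
    moreover have "{} \<notin> players (E - S)"
      unfolding players_def by simp
    ultimately show ?thesis
      using assms(1) finite_players[of "E - S"] by simp
  qed
  finally show ?thesis .
qed

lemma nash_removed_mass_on_cheaper:
  assumes fin: "finite E"
    and s: "nash E f mu s" and t: "nash (E - S) f (removed_mass E S mu) t"
    and A: "A = {i \<in> E - S. cost (E - S) f t i < cost E f s i}"
    and R': "R' \<in> players (E - S)"
  shows "(\<Sum>R\<in>{R\<in>players E. R - S = R'}. \<Sum>i\<in>A. s R i) \<le> (\<Sum>i\<in>A. t R' i)"
proof -
  have s_cp: "consumption_profile E mu s" and t_cp: "consumption_profile (E - S) (removed_mass E S mu) t"
    using s t unfolding nash_def by auto
  have finA: "finite A"
    using fin A by simp
  show ?thesis
  proof (cases "\<exists>R\<in>players E. R - S = R' \<and> (\<exists>k\<in>A. 0 < s R k)")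
    case False
    then have "(\<Sum>R\<in>{R\<in>players E. R - S = R'}. \<Sum>i\<in>A. s R i) = 0"
      by (intro sum.neutral ballI) (auto intro: order.antisym consumption_profileD(1)[OF s_cp] simp: not_less)
    moreover have "0 \<le> (\<Sum>i\<in>A. t R' i)"
      by (intro sum_nonneg consumption_profileD(1)[OF t_cp R'])
    ultimately show ?thesis
      by simp
  next
    case True
    then obtain R k where R: "R \<in> players E" "R - S = R'" and k: "k \<in> A" "0 < s R k"
      by auto
    have kR: "k \<in> R"
      using consumption_profileD(2)[OF s_cp R(1)] k(2) by force
    have "t R' i = 0" if i: "i \<in> R' - A" for i
    proof (rule ccontr)
      assume "t R' i \<noteq> 0"
      with consumption_profileD(1)[OF t_cp R'] have "0 < t R' i"
        by (simp add: order_less_le)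
      moreover have "k \<in> R'"
        using kR k(1) R(2) A by auto
      ultimately have "cost (E - S) f t i \<le> cost (E - S) f t k"
        using t R' i unfolding nash_def by blast
      also have "\<dots> < cost E f s k"
        using k(1) A by simp
      also have "\<dots> \<le> cost E f s i"
        using s R(1) kR k(2) i R(2) unfolding nash_def by blast
      finally have "i \<in> A"
        using i R' A unfolding players_def by auto
      with i show False
        by simp
    qed
    then have "(\<Sum>i\<in>A. t R' i) = removed_mass E S mu R'"
      using consumption_profile_sum_eq[OF _ t_cp R' finA] fin by simp
    also have "\<dots> = (\<Sum>R\<in>{R\<in>players E. R - S = R'}. mu R)"
      unfolding removed_mass_def ..
    also have "\<dots> \<ge> (\<Sum>R\<in>{R\<in>players E. R - S = R'}. \<Sum>i\<in>A. s R i)"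
      by (intro sum_mono consumption_profile_sum_le[OF fin s_cp _ finA]) simp
    finally show ?thesis .
  qed
qed

theorem nash_cost_le_removed:
  assumes fin: "finite E" and mono: "\<forall>j\<in>E. mono_on {0..} (f j)"
    and s: "nash E f mu s" and t: "nash (E - S) f (removed_mass E S mu) t"
    and j: "j \<in> E - S"
  shows "cost E f s j \<le> cost (E - S) f t j"
proof (rule ccontr)
  define A where "A = {i \<in> E - S. cost (E - S) f t i < cost E f s i}"
  assume "\<not> ?thesis"
  with j have jA: "j \<in> A"
    unfolding A_def by simp
  have s_cp: "consumption_profile E mu s" and t_cp: "consumption_profile (E - S) (removed_mass E S mu) t"
    using s t unfolding nash_def by auto
  have load_drop: "load (E - S) t i < load E s i" if "i \<in> A" for i
  proof (rule ccontr)
    assume "\<not> ?thesis"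
    then have "f i (load E s i) \<le> f i (load (E - S) t i)"
      using that mono load_nonneg[OF s_cp] load_nonneg[OF t_cp] unfolding A_def
      by (auto intro: mono_onD)
    with that show False
      unfolding A_def cost_def by simp
  qed
  have "(\<Sum>i\<in>A. load (E - S) t i) < (\<Sum>i\<in>A. load E s i)"
    by (rule sum_strict_mono_ex1) (use fin jA load_drop in \<open>auto simp: A_def intro: less_imp_le\<close>)
  also have "\<dots> = (\<Sum>R'\<in>players (E - S). \<Sum>R\<in>{R\<in>players E. R - S = R'}. \<Sum>i\<in>A. s R i)"
    by (rule sum_load_regroup[OF fin s_cp]) (auto simp: A_def)
  also have "\<dots> \<le> (\<Sum>R'\<in>players (E - S). \<Sum>i\<in>A. t R' i)"
    by (intro sum_mono nash_removed_mass_on_cheaper[OF fin s t A_def])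
  also have "\<dots> = (\<Sum>i\<in>A. load (E - S) t i)"
    unfolding load_def by (rule sum.swap)
  finally show False
    by simp
qed

section \<open>Existence of equilibria\<close>

definition beckmann_potential ::
  "nat set \<Rightarrow> (nat \<Rightarrow> real \<Rightarrow> real) \<Rightarrow> (nat set \<Rightarrow> nat \<Rightarrow> real) \<Rightarrow> real" where
  "beckmann_potential E f s = (\<Sum>j\<in>E. integral {0..load E s j} (f j))"

definition move_mass ::
  "nat set \<Rightarrow> nat \<Rightarrow> nat \<Rightarrow> real \<Rightarrow> (nat set \<Rightarrow> nat \<Rightarrow> real) \<Rightarrow> nat set \<Rightarrow> nat \<Rightarrow> real" where
  "move_mass R k i \<delta> s = (\<lambda>R' x. s R' x + (if R' = R \<and> x = i then \<delta> else 0)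
                                    - (if R' = R \<and> x = k then \<delta> else 0))"

lemma consumption_profile_move_mass:
  assumes "finite E" "consumption_profile E mu s" "R \<in> players E"
    and "k \<in> R" "i \<in> R" "k \<noteq> i" "0 \<le> \<delta>" "\<delta> \<le> s R k"
  shows "consumption_profile E mu (move_mass R k i \<delta> s)"
  unfolding consumption_profile_def
proof (intro ballI conjI allI impI)
  fix R' x assume R': "R' \<in> players E"
  show "0 \<le> move_mass R k i \<delta> s R' x"
    using assms consumption_profileD(1)[OF assms(2) R'] unfolding move_mass_def by auto
  show "move_mass R k i \<delta> s R' x = 0" if "x \<notin> R'"
    using that assms consumption_profileD(2)[OF assms(2) R'] unfolding move_mass_def by auto
next
  fix R' assume R': "R' \<in> players E"
  have "(\<Sum>x\<in>R'. move_mass R k i \<delta> s R' x) = (\<Sum>x\<in>R'. s R' x)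
      + (\<Sum>x\<in>R'. if R' = R \<and> x = i then \<delta> else 0) - (\<Sum>x\<in>R'. if R' = R \<and> x = k then \<delta> else 0)"
    unfolding move_mass_def by (simp add: sum.distrib sum_subtractf)
  also have "\<dots> = (\<Sum>x\<in>R'. s R' x)"
    using finite_player[OF assms(1) R'] assms(4,5) by (cases "R' = R") (auto simp: sum.delta')
  finally show "(\<Sum>x\<in>R'. move_mass R k i \<delta> s R' x) = mu R'"
    using consumption_profileD(3)[OF assms(2) R'] by simp
qed

lemma load_move_mass:
  assumes "finite E" "R \<in> players E"
  shows "load E (move_mass R k i \<delta> s) x = load E s x + (if x = i then \<delta> else 0) - (if x = k then \<delta> else 0)"
  using finite_players[OF assms(1)] assms(2)
  by (simp add: load_def move_mass_def sum.distrib sum_subtractf sum.delta')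

lemma integral_increment_bounds:
  fixes g :: "real \<Rightarrow> real"
  assumes "continuous_on {0..} g" "mono_on {0..} g" "0 \<le> a" "a \<le> b"
  shows "(b - a) * g a \<le> integral {0..b} g - integral {0..a} g"
    and "integral {0..b} g - integral {0..a} g \<le> (b - a) * g b"
proof -
  have "g integrable_on {0..b}" "g integrable_on {a..b}"
    by (intro integrable_continuous_interval continuous_on_subset[OF assms(1)]; use assms in auto)+
  then have increment: "integral {0..b} g - integral {0..a} g = integral {a..b} g"
    using Henstock_Kurzweil_Integration.integral_combine[OF assms(3,4), of g] by simp
  have "integral {a..b} (\<lambda>_. g a) \<le> integral {a..b} g" "integral {a..b} g \<le> integral {a..b} (\<lambda>_. g b)"
    by (intro integral_le \<open>g integrable_on {a..b}\<close> integrable_const_ivl;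
        use assms in \<open>auto intro: mono_onD[OF assms(2)]\<close>)+
  with assms(4) show "(b - a) * g a \<le> integral {0..b} g - integral {0..a} g"
    and "integral {0..b} g - integral {0..a} g \<le> (b - a) * g b"
    unfolding increment by simp_all
qed

lemma beckmann_potential_move_mass_le:
  assumes fin: "finite E" and mono: "\<forall>j\<in>E. mono_on {0..} (f j)"
    and cont: "\<forall>j\<in>E. continuous_on {0..} (f j)"
    and s: "consumption_profile E mu s" and R: "R \<in> players E"
    and k: "k \<in> R" and i: "i \<in> R" and ki: "k \<noteq> i" and \<delta>: "0 \<le> \<delta>" "\<delta> \<le> s R k"
  shows "beckmann_potential E f (move_mass R k i \<delta> s) - beckmann_potential E f s
           \<le> \<delta> * (f i (load E s i + \<delta>) - f k (load E s k - \<delta>))"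
proof -
  define g where "g x = integral {0..load E (move_mass R k i \<delta> s) x} (f x) - integral {0..load E s x} (f x)" for x
  have kE: "k \<in> E" and iE: "i \<in> E"
    using R k i unfolding players_def by auto
  have "s R k \<le> load E s k"
    unfolding load_def
    by (rule member_le_sum) (use R finite_players[OF fin] consumption_profileD(1)[OF s] in auto)
  with \<delta> have load_k: "0 \<le> load E s k - \<delta>"
    by simp
  have "beckmann_potential E f (move_mass R k i \<delta> s) - beckmann_potential E f s = (\<Sum>x\<in>E. g x)"
    unfolding beckmann_potential_def g_def by (simp add: sum_subtractf)
  also have "\<dots> = (\<Sum>x\<in>{i, k}. g x)"
    by (rule sum.mono_neutral_right) (use fin kE iE in \<open>auto simp: g_def load_move_mass[OF fin R]\<close>)
  also have "\<dots> = g i + g k"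
    using ki by simp
  also have "g i \<le> \<delta> * f i (load E s i + \<delta>)"
    using integral_increment_bounds(2)[OF cont[rule_format, OF iE] mono[rule_format, OF iE]
        load_nonneg[OF s, of i], where b = "load E s i + \<delta>"] \<delta> ki
    by (simp add: g_def load_move_mass[OF fin R])
  also have "g k \<le> - (\<delta> * f k (load E s k - \<delta>))"
    using integral_increment_bounds(1)[OF cont[rule_format, OF kE] mono[rule_format, OF kE]
        load_k, where b = "load E s k"] \<delta> ki
    by (simp add: g_def load_move_mass[OF fin R])
  finally show ?thesis
    by (simp add: algebra_simps)
qed

lemma beckmann_minimizer_is_nash:
  assumes fin: "finite E" and mono: "\<forall>j\<in>E. mono_on {0..} (f j)"
    and cont: "\<forall>j\<in>E. continuous_on {0..} (f j)"
    and s: "consumption_profile E mu s"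
    and min: "\<forall>s'. consumption_profile E mu s' \<longrightarrow> beckmann_potential E f s \<le> beckmann_potential E f s'"
  shows "nash E f mu s"
  unfolding nash_def
proof (intro conjI s ballI impI)
  fix R k i assume R: "R \<in> players E" and k: "k \<in> R" and i: "i \<in> R" and pos: "0 < s R k"
  show "cost E f s k \<le> cost E f s i"
  proof (rule ccontr)
    define Lk Li where "Lk = load E s k" and "Li = load E s i"
    assume "\<not> ?thesis"
    then have gap: "f i Li < f k Lk"
      unfolding cost_def Lk_def Li_def by simp
    then have ki: "k \<noteq> i"
      unfolding Lk_def Li_def by auto
    have kE: "k \<in> E" and iE: "i \<in> E"
      using R k i unfolding players_def by auto
    have "s R k \<le> Lk"
      unfolding Lk_def load_def
      by (rule member_le_sum) (use R finite_players[OF fin] consumption_profileD(1)[OF s] in auto)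
    define e where "e = (f k Lk - f i Li) / 2"
    have e: "0 < e"
      using gap by (simp add: e_def)
    have "Lk \<in> {0..}" "Li \<in> {0..}"
      using load_nonneg[OF s] unfolding Lk_def Li_def by simp_all
    obtain dk where dk: "0 < dk" "\<forall>x\<in>{0..}. dist x Lk < dk \<longrightarrow> dist (f k x) (f k Lk) < e"
      using continuous_on_iff[THEN iffD1, OF cont[rule_format, OF kE], rule_format, OF \<open>Lk \<in> {0..}\<close> e]
      by blast
    obtain di where di: "0 < di" "\<forall>x\<in>{0..}. dist x Li < di \<longrightarrow> dist (f i x) (f i Li) < e"
      using continuous_on_iff[THEN iffD1, OF cont[rule_format, OF iE], rule_format, OF \<open>Li \<in> {0..}\<close> e]
      by blast
    define \<delta> where "\<delta> = min (s R k) (min dk di / 2)"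
    have \<delta>: "0 < \<delta>" "\<delta> \<le> s R k" "\<delta> < dk" "\<delta> < di"
      using pos dk di unfolding \<delta>_def by auto
    have "f i (Li + \<delta>) < f i Li + e"
      using di(2)[rule_format, of "Li + \<delta>"] \<delta> load_nonneg[OF s] by (auto simp: Li_def dist_real_def)
    also have "\<dots> = f k Lk - e"
      unfolding e_def by argo
    also have "\<dots> < f k (Lk - \<delta>)"
      using dk(2)[rule_format, of "Lk - \<delta>"] \<delta> \<open>s R k \<le> Lk\<close> by (auto simp: dist_real_def)
    finally have "\<delta> * (f i (Li + \<delta>) - f k (Lk - \<delta>)) < 0"
      using \<delta>(1) by (simp add: mult_pos_neg)
    with beckmann_potential_move_mass_le[OF fin mono cont s R k i ki _ \<delta>(2)] \<delta>(1)
    have "beckmann_potential E f (move_mass R k i \<delta> s) < beckmann_potential E f s"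
      unfolding Lk_def Li_def by simp
    moreover have "consumption_profile E mu (move_mass R k i \<delta> s)"
      using consumption_profile_move_mass[OF fin s R k i ki _ \<delta>(2)] \<delta>(1) by simp
    ultimately show False
      using min by fastforce
  qed
qed

lemma consumption_profile_le_mass:
  assumes "finite E" "consumption_profile E mu s" "R \<in> players E"
  shows "s R j \<le> mu R"
  using consumption_profile_sum_le[OF assms, of "{j}"] by simp

lemma load_le_total_mass:
  assumes "finite E" "consumption_profile E mu s"
  shows "load E s j \<le> (\<Sum>R\<in>players E. mu R)"
  unfolding load_def by (intro sum_mono consumption_profile_le_mass[OF assms])

lemma continuous_on_coordinate: "continuous_on UNIV (\<lambda>s :: nat set \<Rightarrow> nat \<Rightarrow> real. s R j)"
  by (rule continuous_on_product_then_coordinatewise[OF continuous_on_product_coordinates])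

lemma compact_Pi_UNIV:
  fixes X :: "'a \<Rightarrow> 'b::topological_space set"
  assumes "\<And>i. compact (X i)"
  shows "compact (Pi UNIV X)"
proof -
  have "compactin (product_topology (\<lambda>i. euclidean) UNIV) (PiE UNIV X)"
    using assms by (simp add: compactin_PiE)
  then show ?thesis
    by (simp add: euclidean_product_topology PiE_UNIV_domain)
qed

text \<open>Consumption profiles are unconstrained off the players; pinning them to zero there leaves
the loads unchanged and makes the set compact.\<close>

lemma compact_consumption_profiles:
  assumes fin: "finite E" and mu: "\<forall>R\<in>players E. 0 \<le> mu R"
  shows "compact {s. consumption_profile E mu s \<and> (\<forall>R j. R \<notin> players E \<longrightarrow> s R j = 0)}"
    (is "compact ?K")
proof -
  define M where "M = (\<Sum>R\<in>players E. mu R)"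
  define box :: "(nat set \<Rightarrow> nat \<Rightarrow> real) set" where "box = Pi UNIV (\<lambda>_. Pi UNIV (\<lambda>_. {0..M}))"
  have "0 \<le> M"
    unfolding M_def using mu by (simp add: sum_nonneg)
  have "?K \<subseteq> box"
    unfolding box_def
  proof (intro subsetI Pi_I)
    fix s R j assume s: "s \<in> ?K"
    then have cp: "consumption_profile E mu s"
      by simp
    show "s R j \<in> {0..M}"
    proof (cases "R \<in> players E")
      case True
      have "mu R \<le> M"
        unfolding M_def by (rule member_le_sum) (use True mu finite_players[OF fin] in auto)
      then show ?thesis
        using consumption_profileD(1)[OF cp True, of j] consumption_profile_le_mass[OF fin cp True, of j] by simp
    qed (use s \<open>0 \<le> M\<close> in auto)
  qed
  moreover have "compact box"
    unfolding box_def by (intro compact_Pi_UNIV compact_Icc)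
  moreover have "closed ?K"
    unfolding consumption_profile_def Ball_def
    by (intro closed_Collect_conj closed_Collect_all closed_Collect_imp open_Collect_const
        closed_Collect_le closed_Collect_eq continuous_on_const continuous_on_coordinate continuous_on_sum)
  ultimately show ?thesis
    using compact_Int_closed[of box ?K] by (simp add: Int_absorb1)
qed

lemma continuous_on_beckmann_potential:
  assumes fin: "finite E" and cont: "\<forall>j\<in>E. continuous_on {0..} (f j)"
  shows "continuous_on {s. consumption_profile E mu s} (beckmann_potential E f)"
  unfolding beckmann_potential_def
proof (intro continuous_on_sum)
  fix j assume j: "j \<in> E"
  define M where "M = (\<Sum>R\<in>players E. mu R)"
  have primitive: "continuous_on {0..M} (\<lambda>x. integral {0..x} (f j))"
    by (intro indefinite_integral_continuous_1 integrable_continuous_interval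
        continuous_on_subset[OF cont[rule_format, OF j]]) auto
  have load: "continuous_on {s. consumption_profile E mu s} (\<lambda>s. load E s j)"
    unfolding load_def by (intro continuous_on_sum continuous_on_subset[OF continuous_on_coordinate]) simp
  have "load E s j \<in> {0..M}" if "consumption_profile E mu s" for s
    using load_nonneg[OF that] load_le_total_mass[OF fin that] unfolding M_def by simp
  then show "continuous_on {s. consumption_profile E mu s} (\<lambda>s. integral {0..load E s j} (f j))"
    using continuous_on_compose2[OF primitive load] by blast
qed

lemma consumption_profile_exists:
  assumes "finite E" "\<forall>R\<in>players E. 0 \<le> mu R"
  shows "consumption_profile E mu (\<lambda>R j. if j = (SOME x. x \<in> R) then mu R else 0)"
  unfolding consumption_profile_def
proof (intro ballI conjI allI impI)
  fix R j assume R: "R \<in> players E"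
  then have "(SOME x. x \<in> R) \<in> R"
    unfolding players_def by (simp add: some_in_eq)
  then show "0 \<le> (if j = (SOME x. x \<in> R) then mu R else 0)"
    and "j \<notin> R \<Longrightarrow> (if j = (SOME x. x \<in> R) then mu R else 0) = 0"
    and "(\<Sum>j\<in>R. if j = (SOME x. x \<in> R) then mu R else 0) = mu R"
    using assms R finite_player[OF assms(1) R] by (auto simp: sum.delta')
qed

lemma beckmann_potential_has_minimizer:
  assumes fin: "finite E" and cont: "\<forall>j\<in>E. continuous_on {0..} (f j)"
    and mu: "\<forall>R\<in>players E. 0 \<le> mu R"
  obtains s where "consumption_profile E mu s"
    and "\<And>s'. consumption_profile E mu s' \<Longrightarrow> beckmann_potential E f s \<le> beckmann_potential E f s'"
proof -
  define K where "K = {s. consumption_profile E mu s \<and> (\<forall>R j. R \<notin> players E \<longrightarrow> s R j = 0)}"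
  define clean where "clean s R = (if R \<in> players E then s R else (\<lambda>_. 0))"
    for s :: "nat set \<Rightarrow> nat \<Rightarrow> real" and R
  have clean: "clean s \<in> K" "beckmann_potential E f (clean s) = beckmann_potential E f s"
    if "consumption_profile E mu s" for s
  proof -
    show "clean s \<in> K"
      using that unfolding K_def clean_def consumption_profile_def by simp
    have "load E (clean s) = load E s"
      unfolding load_def clean_def by (intro ext sum.cong) simp_all
    then show "beckmann_potential E f (clean s) = beckmann_potential E f s"
      unfolding beckmann_potential_def by simp
  qed
  have "\<exists>s\<in>K. \<forall>s'\<in>K. beckmann_potential E f s \<le> beckmann_potential E f s'"
  proof (rule continuous_attains_inf)
    show "compact K"
      unfolding K_def by (rule compact_consumption_profiles[OF fin mu])
    show "K \<noteq> {}"
      using clean(1)[OF consumption_profile_exists[OF fin mu]] by blast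
    show "continuous_on K (beckmann_potential E f)"
      by (rule continuous_on_subset[OF continuous_on_beckmann_potential[OF fin cont]]) (auto simp: K_def)
  qed
  then obtain s where s: "s \<in> K" and min: "\<forall>s'\<in>K. beckmann_potential E f s \<le> beckmann_potential E f s'"
    by blast
  show ?thesis
  proof
    show "consumption_profile E mu s"
      using s by (simp add: K_def)
    show "beckmann_potential E f s \<le> beckmann_potential E f s'" if "consumption_profile E mu s'" for s'
      using min clean[OF that] by metis
  qed
qed

lemma nash_exists:
  assumes fin: "finite E" and mono: "\<forall>j\<in>E. mono_on {0..} (f j)"
    and cont: "\<forall>j\<in>E. continuous_on {0..} (f j)" and mu: "\<forall>R\<in>players E. 0 \<le> mu R"
  obtains s where "nash E f mu s"
  using beckmann_potential_has_minimizer[OF fin cont mu] beckmann_minimizer_is_nash[OF fin mono cont] by metis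

lemma removed_mass_nonneg:
  assumes "\<forall>R\<in>players E. 0 \<le> mu R"
  shows "\<forall>R\<in>players (E - S). 0 \<le> removed_mass E S mu R"
  using assms unfolding removed_mass_def by (auto intro: sum_nonneg)

lemma removed_mass_empty: "R \<in> players E \<Longrightarrow> removed_mass E {} mu R = mu R"
proof -
  assume "R \<in> players E"
  then have "{R' \<in> players E. R' - {} = R} = {R}"
    by auto
  then show ?thesis
    unfolding removed_mass_def by simp
qed

lemma nash_removed_empty: "nash E f mu s \<Longrightarrow> nash (E - {}) f (removed_mass E {} mu) s"
  by (simp add: nash_def consumption_profile_def removed_mass_empty)

lemma nash_cost_unique:
  assumes "finite E" "\<forall>j\<in>E. mono_on {0..} (f j)"
    and "nash E f mu s" "nash E f mu t" "j \<in> E"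
  shows "cost E f s j = cost E f t j"
  using nash_cost_le_removed[OF assms(1,2,3) nash_removed_empty[OF assms(4)]]
    nash_cost_le_removed[OF assms(1,2,4) nash_removed_empty[OF assms(3)]] assms(5)
  by (simp add: order.antisym)

lemma eq_cost_eqI:
  assumes "finite E" "\<forall>j\<in>E. mono_on {0..} (f j)" "nash E f mu s" "j \<in> E"
  shows "eq_cost E f mu j = cost E f s j"
  unfolding eq_cost_def
proof (rule the_equality)
  show "\<exists>s'. nash E f mu s' \<and> cost E f s j = cost E f s' j"
    using assms(3) by blast
  show "c = cost E f s j" if "\<exists>s'. nash E f mu s' \<and> c = cost E f s' j" for c
    using that nash_cost_unique[OF assms(1,2,3) _ assms(4)] by auto
qed

theorem mainTheorem19:
  fixes n :: nat and f :: "nat \<Rightarrow> real \<Rightarrow> real" and mu :: "nat set \<Rightarrow> real" and S :: "nat set"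
  assumes "is_game {1..n} f mu"
    and "\<forall>j\<in>{1..n}. continuous_on {0..} (f j)"
    and "S \<subseteq> {1..n}"
    and "j \<in> {1..n} - S"
  shows "eq_cost ({1..n} - S) f (removed_mass {1..n} S mu) j \<ge> eq_cost {1..n} f mu j"
proof -
  define E where "E = {1..n}"
  have fin: "finite E" and mono: "\<forall>j\<in>E. mono_on {0..} (f j)" and mu: "\<forall>R\<in>players E. 0 \<le> mu R"
    and cont: "\<forall>j\<in>E. continuous_on {0..} (f j)" and j: "j \<in> E - S"
    using assms unfolding is_game_def E_def by auto
  obtain s where s: "nash E f mu s"
    using nash_exists[OF fin mono cont mu] .
  obtain t where t: "nash (E - S) f (removed_mass E S mu) t"
    using nash_exists[of "E - S" f "removed_mass E S mu"] fin mono cont removed_mass_nonneg[OF mu] by blast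
  have "eq_cost E f mu j = cost E f s j"
    using eq_cost_eqI[OF fin mono s] j by simp
  also have "\<dots> \<le> cost (E - S) f t j"
    using nash_cost_le_removed[OF fin mono s t j] .
  also have "\<dots> = eq_cost (E - S) f (removed_mass E S mu) j"
    using eq_cost_eqI[OF _ _ t] fin mono j by simp
  finally show ?thesis
    unfolding E_def .
qed

end
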